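(* Let $f,g:[0,\infty)\to[0,\infty)$, let $0<a<b<\infty$, and suppose $fg$ is Lebesgue integrable on $[a,b]$. Let $(\alpha_1,m_1),(\alpha_2,m_2)\in(0,1]^2$. Suppose $f$ is $(\alpha_1,m_1)$-GA-concave on $[0,\max\{a^{1/m_1},b\}]$ and $g$ is $(\alpha_2,m_2)$-GA-concave on $[0,\max\{a^{1/m_2},b\}]$. Then \begin{multline*} \int_a^b f(x)g(x)\,dx\ge(\ln b-\ln a)\Bigl\{m_1m_2\bigl[L(a,b)-G(\alpha_1,1)-G(\alpha_2,1)+G(\alpha_1+\alpha_2,1)\bigr]f(a^{1/m_1})g(a^{1/m_2})\\ +m_1\bigl[G(\alpha_2,1)-G(\alpha_1+\alpha_2,1)\bigr]f(a^{1/m_1})g(b)+m_2\bigl[G(\alpha_1,1)-G(\alpha_1+\alpha_2,1)\bigr]f(b)g(a^{1/m_2})+G(\alpha_1+\alpha_2,1)f(b)g(b)\Bigr\}. \end{multline*}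
   Context: For $c>0$, $h:[0,c]\to\mathbb{R}$ and $(\alpha,m)\in(0,1]^2$, $h$ is called $(\alpha,m)$-GA-concave on $[0,c]$ if $h\bigl(x^\lambda y^{m(1-\lambda)}\bigr)\ge\lambda^\alpha h(x)+m(1-\lambda^\alpha)h(y)$ for all $x,y\in[0,c]$ and all $\lambda\in[0,1]$ (with the convention $0^0=1$). For fixed $0<a<b$ and $\ell\ge0$, $\alpha>0$, set $G(\alpha,\ell)=\int_0^1 t^\alpha a^{\ell(1-t)}b^{\ell t}\,dt$. For $x,y>0$, $x\neq y$, the logarithmic mean is $L(x,y)=\frac{y-x}{\ln y-\ln x}$. *)

theory Defs
  imports "HOL-Analysis.Analysis"
begin

text \<open>Real power with the convention 0^0 = 1 (x \<ge> 0).\<close>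
definition pw :: "real \<Rightarrow> real \<Rightarrow> real" where
  "pw x t = (if t = 0 then 1 else x powr t)"

definition GA_concave :: "real \<Rightarrow> real \<Rightarrow> real \<Rightarrow> (real \<Rightarrow> real) \<Rightarrow> bool" where
  "GA_concave \<alpha> m c h \<longleftrightarrow>
     (\<forall>x\<in>{0..c}. \<forall>y\<in>{0..c}. \<forall>t\<in>{0..1}.
        h (pw x t * pw y (m * (1 - t))) \<ge> pw t \<alpha> * h x + m * (1 - pw t \<alpha>) * h y)"

definition Gfun :: "real \<Rightarrow> real \<Rightarrow> real \<Rightarrow> real \<Rightarrow> real" where
  "Gfun a b \<alpha> l = integral {0..1} (\<lambda>t. t powr \<alpha> * a powr (l * (1 - t)) * b powr (l * t))"

definition logmean :: "real \<Rightarrow> real \<Rightarrow> real" where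
  "logmean x y = (y - x) / (ln y - ln x)"

end

theory Submission
  imports Defs
begin

text \<open>Parametrise \<open>[a,b]\<close> geometrically, \<open>x = a powr (1 - t) * b powr t\<close> with
  \<open>t = (ln x - ln a) / (ln b - ln a) \<in> [0,1]\<close>.  GA-concavity applied to the points \<open>b\<close> and
  \<open>a powr (1/m)\<close> bounds \<open>f x\<close> from below by \<open>t powr \<alpha> * f b + m * (1 - t powr \<alpha>) * f (a powr (1/m))\<close>,
  and likewise \<open>g x\<close>; these bounds are nonnegative, so their product bounds \<open>f x * g x\<close>.
  Since \<open>dx = (ln b - ln a) * x dt\<close>, integrating the product over \<open>t \<in> [0,1]\<close> only involves
  \<open>\<integral> x dt = L(a,b)\<close> and \<open>\<integral> t powr \<alpha> * x dt = G(\<alpha>,1)\<close>.\<close>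

lemma log_ratio_mem_unit_interval:
  fixes a b x :: real
  assumes "0 < a" "a < b" "x \<in> {a..b}"
  shows "(ln x - ln a) / (ln b - ln a) \<in> {0..1}"
proof -
  have "0 < x"
    using assms by auto
  then have "ln a \<le> ln x" "ln x \<le> ln b" "ln a < ln b"
    using assms by auto
  then show ?thesis
    by (auto simp: field_simps)
qed

lemma pw_eq_powr: "0 < x \<Longrightarrow> pw x t = x powr t"
  by (simp add: pw_def)

lemma GA_concave_lower_bound:
  fixes a b x :: real
  assumes h: "GA_concave \<alpha> m c h" and ab: "0 < a" "a < b" and "0 < m" "0 < \<alpha>"
    and c: "b \<le> c" "a powr (1/m) \<le> c" and x: "x \<in> {a..b}"
  defines "t \<equiv> (ln x - ln a) / (ln b - ln a)"
  shows "t powr \<alpha> * h b + m * (1 - t powr \<alpha>) * h (a powr (1/m)) \<le> h x"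
proof -
  have t: "t \<in> {0..1}"
    unfolding t_def using log_ratio_mem_unit_interval[OF ab x] .
  have "ln b - ln a \<noteq> 0"
    using ab by simp
  then have "t * (ln b - ln a) = ln x - ln a"
    unfolding t_def by simp
  then have "t * ln b + (1 - t) * ln a = ln x"
    by (simp add: algebra_simps)
  then have "b powr t * a powr (1 - t) = x"
    using ab x by (simp add: powr_def exp_add[symmetric])
  then have geometric_point: "pw b t * pw (a powr (1/m)) (m * (1 - t)) = x"
    using ab \<open>0 < m\<close> by (simp add: pw_eq_powr powr_powr)
  have "b \<in> {0..c}" "a powr (1/m) \<in> {0..c}"
    using ab c by auto
  with h t have "pw t \<alpha> * h b + m * (1 - pw t \<alpha>) * h (a powr (1/m))
      \<le> h (pw b t * pw (a powr (1/m)) (m * (1 - t)))"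
    unfolding GA_concave_def by blast
  then show ?thesis
    using geometric_point \<open>0 < \<alpha>\<close> by (simp add: pw_def)
qed

lemma logmean_has_integral:
  fixes a b :: real
  assumes "0 < a" "0 < b" "a \<noteq> b"
  shows "((\<lambda>t. exp (ln a + t * (ln b - ln a))) has_integral logmean a b) {0..1}"
proof -
  have D: "ln b - ln a \<noteq> 0"
    using assms by simp
  have "((\<lambda>t. exp (ln a + t * (ln b - ln a))) has_integral
      exp (ln a + 1 * (ln b - ln a)) / (ln b - ln a) - exp (ln a + 0 * (ln b - ln a)) / (ln b - ln a)) {0..1}"
    by (rule fundamental_theorem_of_calculus)
      (use D in \<open>auto simp: has_real_derivative_iff_has_vector_derivative[symmetric]
        intro!: derivative_eq_intros\<close>)
  then show ?thesis
    using assms by (simp add: logmean_def diff_divide_distrib)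
qed

lemma Gfun_has_integral:
  fixes a b \<alpha> :: real
  assumes "0 < a" "0 < b" "0 < \<alpha>"
  shows "((\<lambda>t. t powr \<alpha> * exp (ln a + t * (ln b - ln a))) has_integral Gfun a b \<alpha> 1) {0..1}"
proof -
  have "continuous_on {0..1} (\<lambda>t::real. t powr \<alpha> * exp (ln a + t * (ln b - ln a)))"
    using \<open>0 < \<alpha>\<close> by (intro continuous_intros continuous_on_powr') auto
  then have integrable: "(\<lambda>t. t powr \<alpha> * exp (ln a + t * (ln b - ln a))) integrable_on {0..1}"
    by (rule integrable_continuous_interval)
  have geometric: "\<And>t. t powr \<alpha> * a powr (1 * (1 - t)) * b powr (1 * t)
      = t powr \<alpha> * exp (ln a + t * (ln b - ln a))"
    using assms by (simp add: powr_def exp_add[symmetric] algebra_simps)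
  show ?thesis
    unfolding Gfun_def geometric using integrable by (rule integrable_integral)
qed

lemma has_integral_log_substitution:
  fixes a b I :: real and Q :: "real \<Rightarrow> real"
  assumes ab: "0 < a" "a < b" and Q: "continuous_on {0..1} Q"
    and I: "((\<lambda>t. exp (ln a + t * (ln b - ln a)) * Q t) has_integral I) {0..1}"
  shows "((\<lambda>x. Q ((ln x - ln a) / (ln b - ln a))) has_integral (ln b - ln a) * I) {a..b}"
proof -
  define D where "D = ln b - ln a"
  define \<phi> where "\<phi> = (\<lambda>t. exp (ln a + t * D))"
  define P where "P = (\<lambda>x. Q ((ln x - ln a) / D))"
  have "D > 0"
    using ab ln_less_cancel_iff[of a b] by (simp add: D_def)
  have \<phi>_ends: "\<phi> 0 = a" "\<phi> 1 = b"
    using ab by (auto simp: \<phi>_def D_def)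
  have "\<phi> ` {0..1} \<subseteq> {\<phi> 0..\<phi> 1}"
    using \<open>D > 0\<close> by (auto simp: \<phi>_def mult_left_le_one_le)
  then have \<phi>_range: "\<phi> ` {0..1} \<subseteq> {a..b}"
    using \<phi>_ends by simp
  have "continuous_on {a..b} (\<lambda>x. (ln x - ln a) / D)"
    using ab \<open>D > 0\<close> by (intro continuous_intros) auto
  then have P_cont: "continuous_on {a..b} P"
    unfolding P_def
    by (rule continuous_on_compose2[OF Q])
      (use log_ratio_mem_unit_interval[OF ab] in \<open>auto simp: D_def\<close>)
  have "((\<lambda>t. (\<phi> t * D) *\<^sub>R P (\<phi> t)) has_integral integral {\<phi> 0..\<phi> 1} P) {0..1}"
    by (rule has_integral_substitution[OF _ _ \<phi>_range P_cont])
      (use \<phi>_ends ab in \<open>auto simp: \<phi>_def intro!: derivative_eq_intros\<close>)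
  moreover have "P (\<phi> t) = Q t" for t
    using \<open>D > 0\<close> by (simp add: \<phi>_def P_def)
  ultimately have "((\<lambda>t. D * (\<phi> t * Q t)) has_integral integral {a..b} P) {0..1}"
    using \<phi>_ends by (simp add: ac_simps)
  moreover have "((\<lambda>t. D * (\<phi> t * Q t)) has_integral D * I) {0..1}"
    using has_integral_mult_right[OF I] by (simp add: \<phi>_def D_def)
  ultimately have "integral {a..b} P = D * I"
    by (rule has_integral_unique)
  then show ?thesis
    using integrable_integral[OF integrable_continuous_interval[OF P_cont]]
    by (simp add: P_def D_def)
qed

lemma GA_concave_product_lower_bound:
  fixes f g :: "real \<Rightarrow> real" and a b x :: real
  assumes f_nonneg: "\<forall>x\<ge>0. f x \<ge> 0" and g_nonneg: "\<forall>x\<ge>0. g x \<ge> 0"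
    and ab: "0 < a" "a < b" and x: "x \<in> {a..b}"
    and p1: "0 < \<alpha>1" "0 < m1" and p2: "0 < \<alpha>2" "\<alpha>2 \<le> 1" "0 < m2" "m2 \<le> 1"
    and fc: "GA_concave \<alpha>1 m1 (max (a powr (1/m1)) b) f"
    and gc: "GA_concave \<alpha>2 m2 (max (a powr (1/m2)) b) g"
  defines "t \<equiv> (ln x - ln a) / (ln b - ln a)"
  shows "(t powr \<alpha>1 * f b + m1 * (1 - t powr \<alpha>1) * f (a powr (1/m1)))
      * (t powr \<alpha>2 * g b + m2 * (1 - t powr \<alpha>2) * g (a powr (1/m2))) \<le> f x * g x"
proof -
  have "t \<in> {0..1}"
    unfolding t_def using log_ratio_mem_unit_interval[OF ab x] .
  then have "t powr \<alpha>2 \<le> 1"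
    using p2 by (auto intro: powr_le1)
  then have "0 \<le> t powr \<alpha>2 * g b + m2 * (1 - t powr \<alpha>2) * g (a powr (1/m2))"
    using g_nonneg p2 ab by auto
  moreover have "0 \<le> f x"
    using f_nonneg x ab by auto
  ultimately show ?thesis
    unfolding t_def
    by (intro mult_mono GA_concave_lower_bound[OF fc ab p1(2,1) _ _ x]
        GA_concave_lower_bound[OF gc ab p2(3,1) _ _ x]) auto
qed

lemma GA_lower_bound_product_has_integral:
  fixes a b \<alpha>1 \<alpha>2 m1 m2 u u0 v v0 :: real
  assumes "0 < a" "0 < b" "a \<noteq> b" "0 < \<alpha>1" "0 < \<alpha>2"
  shows "((\<lambda>t. exp (ln a + t * (ln b - ln a)) *
            ((t powr \<alpha>1 * u + m1 * (1 - t powr \<alpha>1) * u0) * (t powr \<alpha>2 * v + m2 * (1 - t powr \<alpha>2) * v0)))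
    has_integral
      m1 * m2 * (logmean a b - Gfun a b \<alpha>1 1 - Gfun a b \<alpha>2 1 + Gfun a b (\<alpha>1 + \<alpha>2) 1) * u0 * v0
      + m1 * (Gfun a b \<alpha>2 1 - Gfun a b (\<alpha>1 + \<alpha>2) 1) * u0 * v
      + m2 * (Gfun a b \<alpha>1 1 - Gfun a b (\<alpha>1 + \<alpha>2) 1) * u * v0
      + Gfun a b (\<alpha>1 + \<alpha>2) 1 * u * v) {0..1}"
    (is "(?f has_integral _) _")
proof -
  define \<phi> where "\<phi> t = exp (ln a + t * (ln b - ln a))" for t
  note L = logmean_has_integral[OF assms(1-3), folded \<phi>_def]
  note G = Gfun_has_integral[OF assms(1,2), folded \<phi>_def]
  have G12: "((\<lambda>t. t powr (\<alpha>1 + \<alpha>2) * \<phi> t) has_integral Gfun a b (\<alpha>1 + \<alpha>2) 1) {0..1}"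
    using G[of "\<alpha>1 + \<alpha>2"] assms by simp
  have "((\<lambda>t. m1 * m2 * (\<phi> t - t powr \<alpha>1 * \<phi> t - t powr \<alpha>2 * \<phi> t + t powr (\<alpha>1 + \<alpha>2) * \<phi> t) * u0 * v0
        + m1 * (t powr \<alpha>2 * \<phi> t - t powr (\<alpha>1 + \<alpha>2) * \<phi> t) * u0 * v
        + m2 * (t powr \<alpha>1 * \<phi> t - t powr (\<alpha>1 + \<alpha>2) * \<phi> t) * u * v0
        + t powr (\<alpha>1 + \<alpha>2) * \<phi> t * u * v)
    has_integral
      m1 * m2 * (logmean a b - Gfun a b \<alpha>1 1 - Gfun a b \<alpha>2 1 + Gfun a b (\<alpha>1 + \<alpha>2) 1) * u0 * v0
      + m1 * (Gfun a b \<alpha>2 1 - Gfun a b (\<alpha>1 + \<alpha>2) 1) * u0 * v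
      + m2 * (Gfun a b \<alpha>1 1 - Gfun a b (\<alpha>1 + \<alpha>2) 1) * u * v0
      + Gfun a b (\<alpha>1 + \<alpha>2) 1 * u * v) {0..1}"
    by (intro has_integral_mult_right has_integral_mult_left has_integral_add has_integral_diff
        L G G12 assms)
  moreover have "?f t = m1 * m2 * (\<phi> t - t powr \<alpha>1 * \<phi> t - t powr \<alpha>2 * \<phi> t + t powr (\<alpha>1 + \<alpha>2) * \<phi> t) * u0 * v0
        + m1 * (t powr \<alpha>2 * \<phi> t - t powr (\<alpha>1 + \<alpha>2) * \<phi> t) * u0 * v
        + m2 * (t powr \<alpha>1 * \<phi> t - t powr (\<alpha>1 + \<alpha>2) * \<phi> t) * u * v0
        + t powr (\<alpha>1 + \<alpha>2) * \<phi> t * u * v" for t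
    by (simp add: \<phi>_def powr_add algebra_simps)
  ultimately show ?thesis
    by simp
qed

theorem theorem3p7:
  fixes f g :: "real \<Rightarrow> real" and a b \<alpha>1 m1 \<alpha>2 m2 :: real
  assumes f_nonneg: "\<forall>x\<ge>0. f x \<ge> 0" and g_nonneg: "\<forall>x\<ge>0. g x \<ge> 0"
    and ab: "0 < a" "a < b"
    and int: "set_integrable lborel {a..b} (\<lambda>x. f x * g x)"
    and p1: "0 < \<alpha>1" "\<alpha>1 \<le> 1" "0 < m1" "m1 \<le> 1"
    and p2: "0 < \<alpha>2" "\<alpha>2 \<le> 1" "0 < m2" "m2 \<le> 1"
    and fc: "GA_concave \<alpha>1 m1 (max (a powr (1/m1)) b) f"
    and gc: "GA_concave \<alpha>2 m2 (max (a powr (1/m2)) b) g"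
  shows "(LBINT x:{a..b}. f x * g x) \<ge>
    (ln b - ln a) *
     (m1 * m2 * (logmean a b - Gfun a b \<alpha>1 1 - Gfun a b \<alpha>2 1 + Gfun a b (\<alpha>1 + \<alpha>2) 1)
          * f (a powr (1/m1)) * g (a powr (1/m2))
      + m1 * (Gfun a b \<alpha>2 1 - Gfun a b (\<alpha>1 + \<alpha>2) 1) * f (a powr (1/m1)) * g b
      + m2 * (Gfun a b \<alpha>1 1 - Gfun a b (\<alpha>1 + \<alpha>2) 1) * f b * g (a powr (1/m2))
      + Gfun a b (\<alpha>1 + \<alpha>2) 1 * f b * g b)"
proof -
  define Q where "Q t = (t powr \<alpha>1 * f b + m1 * (1 - t powr \<alpha>1) * f (a powr (1/m1)))
    * (t powr \<alpha>2 * g b + m2 * (1 - t powr \<alpha>2) * g (a powr (1/m2)))" for t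
  have "continuous_on {0..1} Q"
    unfolding Q_def using p1 p2 by (intro continuous_intros continuous_on_powr') auto
  from has_integral_log_substitution[OF ab this
      GA_lower_bound_product_has_integral[of a b \<alpha>1 \<alpha>2 "f b" m1 "f (a powr (1/m1))"
        "g b" m2 "g (a powr (1/m2))", folded Q_def]]
  have lower_integral: "((\<lambda>x. Q ((ln x - ln a) / (ln b - ln a))) has_integral (ln b - ln a) *
     (m1 * m2 * (logmean a b - Gfun a b \<alpha>1 1 - Gfun a b \<alpha>2 1 + Gfun a b (\<alpha>1 + \<alpha>2) 1)
          * f (a powr (1/m1)) * g (a powr (1/m2))
      + m1 * (Gfun a b \<alpha>2 1 - Gfun a b (\<alpha>1 + \<alpha>2) 1) * f (a powr (1/m1)) * g b
      + m2 * (Gfun a b \<alpha>1 1 - Gfun a b (\<alpha>1 + \<alpha>2) 1) * f b * g (a powr (1/m2))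
      + Gfun a b (\<alpha>1 + \<alpha>2) 1 * f b * g b)) {a..b}"
    using ab p1 p2 by simp
  have "((\<lambda>x. f x * g x) has_integral (LBINT x:{a..b}. f x * g x)) {a..b}"
    using set_borel_integral_eq_integral[OF int] by (simp add: integrable_integral)
  with lower_integral show ?thesis
    by (rule has_integral_le)
      (use GA_concave_product_lower_bound[OF f_nonneg g_nonneg ab _ p1(1,3) p2 fc gc] in
        \<open>simp add: Q_def\<close>)
qed

end
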